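(* Let $E$ and $F$ be locally convex spaces over $K$ and let $A\subseteq E$ be a c-precompact set. Then: (1) for every continuous linear map $f:E\to F$, the set $f(A)$ is c-precompact in $F$; (2) the closure $\overline{A}$ of $A$ in $E$ is c-precompact.
   Context: $K$ is a field complete with respect to a non-trivial non-archimedean absolute value $|\cdot|$, with $B_K=\{x\in K:|x|\le 1\}$. A locally convex space over $K$ is a topological $K$-vector space whose topology is defined by a family of non-archimedean seminorms. A subset $A$ is absolutely convex if it is a $B_K$-submodule; a set is convex if it has the form $x+A$ with $A$ absolutely convex. For an absolutely convex set $A$, a convex filter on $A$ is a filter on $A$ having a base consisting of convex sets; a maximal convex filter on $A$ is a convex filter on $A$ not properly contained in any other convex filter on $A$. A filter $\mathcal F$ on $A$ is Cauchy if for every zero neighbourhood $U$ of $E$ there is $X\in\mathcal F$ with $X-X\subseteq U$. An absolutely convex set $A$ is c-precompact if every maximal convex filter on $A$ is a Cauchy filter. *)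

theory Defs
  imports "HOL-Analysis.Analysis"
begin

definition nonarch_abs :: "('k::field \<Rightarrow> real) \<Rightarrow> bool" where
  "nonarch_abs v \<longleftrightarrow>
     (\<forall>x. v x \<ge> 0) \<and> (\<forall>x. v x = 0 \<longleftrightarrow> x = 0) \<and>
     (\<forall>x y. v (x * y) = v x * v y) \<and>
     (\<forall>x y. v (x + y) \<le> max (v x) (v y))"

definition nontrivial_abs :: "('k::field \<Rightarrow> real) \<Rightarrow> bool" where
  "nontrivial_abs v \<longleftrightarrow> (\<exists>x. x \<noteq> 0 \<and> v x \<noteq> 1)"

definition complete_abs :: "('k::field \<Rightarrow> real) \<Rightarrow> bool" where
  "complete_abs v \<longleftrightarrow>
     (\<forall>s::nat \<Rightarrow> 'k. (\<forall>e>0. \<exists>N. \<forall>m\<ge>N. \<forall>n\<ge>N. v (s m - s n) < e) \<longrightarrow>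
        (\<exists>l. \<forall>e>0. \<exists>N. \<forall>n\<ge>N. v (s n - l) < e))"

definition complete_nonarch_field :: "('k::field \<Rightarrow> real) \<Rightarrow> bool" where
  "complete_nonarch_field v \<longleftrightarrow> nonarch_abs v \<and> nontrivial_abs v \<and> complete_abs v"

definition nonarch_seminorm ::
  "('k::field \<Rightarrow> real) \<Rightarrow> ('k \<Rightarrow> 'e::ab_group_add \<Rightarrow> 'e) \<Rightarrow> ('e \<Rightarrow> real) \<Rightarrow> bool" where
  "nonarch_seminorm v smul p \<longleftrightarrow>
     (\<forall>x. p x \<ge> 0) \<and> (\<forall>c x. p (smul c x) = v c * p x) \<and>
     (\<forall>x y. p (x + y) \<le> max (p x) (p y))"

text \<open>A locally convex space over K: a K-vector space (scalar multiplication smul)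
  together with a family P of non-archimedean seminorms defining its topology.\<close>
definition lcs ::
  "('k::field \<Rightarrow> real) \<Rightarrow> ('k \<Rightarrow> 'e::ab_group_add \<Rightarrow> 'e) \<Rightarrow> ('e \<Rightarrow> real) set \<Rightarrow> bool" where
  "lcs v smul P \<longleftrightarrow> Vector_Spaces.vector_space smul \<and> (\<forall>p\<in>P. nonarch_seminorm v smul p)"

definition seminorm_open :: "('e::ab_group_add \<Rightarrow> real) set \<Rightarrow> 'e set \<Rightarrow> bool" where
  "seminorm_open P U \<longleftrightarrow>
     (\<forall>x\<in>U. \<exists>S e. finite S \<and> S \<subseteq> P \<and> e > 0 \<and> {y. \<forall>p\<in>S. p (y - x) < e} \<subseteq> U)"

definition seminorm_topology :: "('e::ab_group_add \<Rightarrow> real) set \<Rightarrow> 'e topology" where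
  "seminorm_topology P = topology (seminorm_open P)"

lemma seminorm_open_Int: "seminorm_open P S \<Longrightarrow> seminorm_open P T \<Longrightarrow> seminorm_open P (S \<inter> T)"
  unfolding seminorm_open_def
proof
  fix x assume S: "\<forall>x\<in>S. \<exists>S' e. finite S' \<and> S' \<subseteq> P \<and> e > 0 \<and> {y. \<forall>p\<in>S'. p (y - x) < e} \<subseteq> S"
    and T: "\<forall>x\<in>T. \<exists>S' e. finite S' \<and> S' \<subseteq> P \<and> e > 0 \<and> {y. \<forall>p\<in>S'. p (y - x) < e} \<subseteq> T"
    and x: "x \<in> S \<inter> T"
  have xS: "x \<in> S" "x \<in> T" using x by auto
  obtain S1 e1 where 1: "finite S1 \<and> S1 \<subseteq> P \<and> e1 > 0 \<and> {y. \<forall>p\<in>S1. p (y - x) < e1} \<subseteq> S"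
    using bspec[OF S xS(1)] by iprover
  obtain S2 e2 where 2: "finite S2 \<and> S2 \<subseteq> P \<and> e2 > 0 \<and> {y. \<forall>p\<in>S2. p (y - x) < e2} \<subseteq> T"
    using bspec[OF T xS(2)] by iprover
  have "{y. \<forall>p\<in>S1 \<union> S2. p (y - x) < min e1 e2} \<subseteq> S \<inter> T"
  proof
    fix y assume "y \<in> {y. \<forall>p\<in>S1 \<union> S2. p (y - x) < min e1 e2}"
    then have a: "y \<in> {y. \<forall>p\<in>S1. p (y - x) < e1}" and b: "y \<in> {y. \<forall>p\<in>S2. p (y - x) < e2}"
      by auto
    show "y \<in> S \<inter> T" using subsetD[OF conjunct2[OF conjunct2[OF conjunct2[OF 1]]] a] subsetD[OF conjunct2[OF conjunct2[OF conjunct2[OF 2]]] b] by (rule IntI)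
  qed
  moreover have "finite (S1 \<union> S2)" "S1 \<union> S2 \<subseteq> P" "min e1 e2 > 0" using 1 2 by auto
  ultimately show "\<exists>S' e. finite S' \<and> S' \<subseteq> P \<and> e > 0 \<and> {y. \<forall>p\<in>S'. p (y - x) < e} \<subseteq> S \<inter> T"
    by iprover
qed
lemma seminorm_open_Union: "\<forall>U\<in>K. seminorm_open P U \<Longrightarrow> seminorm_open P (\<Union>K)"
  unfolding seminorm_open_def
proof
  fix x assume K: "\<forall>U\<in>K. \<forall>x\<in>U. \<exists>S e. finite S \<and> S \<subseteq> P \<and> e > 0 \<and> {y. \<forall>p\<in>S. p (y - x) < e} \<subseteq> U"
    and "x \<in> \<Union>K"
  then obtain U where U: "U \<in> K" "x \<in> U" by blast
  then obtain S e where "finite S \<and> S \<subseteq> P \<and> e > 0 \<and> {y. \<forall>p\<in>S. p (y - x) < e} \<subseteq> U"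
    using bspec[OF bspec[OF K U(1)] U(2)] by iprover
  moreover have "U \<subseteq> \<Union>K" using U by blast
  ultimately show "\<exists>S e. finite S \<and> S \<subseteq> P \<and> e > 0 \<and> {y. \<forall>p\<in>S. p (y - x) < e} \<subseteq> \<Union>K"
    by (meson subset_trans)
qed
lemma istopology_seminorm_open: "istopology (seminorm_open P)"
  unfolding istopology_def using seminorm_open_Int seminorm_open_Union by (intro conjI allI impI; simp add: seminorm_open_Int seminorm_open_Union)

definition zero_nbhd :: "('e::ab_group_add \<Rightarrow> real) set \<Rightarrow> 'e set \<Rightarrow> bool" where
  "zero_nbhd P U \<longleftrightarrow> (\<exists>W. openin (seminorm_topology P) W \<and> 0 \<in> W \<and> W \<subseteq> U)"

definition abs_convex ::
  "('k::field \<Rightarrow> real) \<Rightarrow> ('k \<Rightarrow> 'e::ab_group_add \<Rightarrow> 'e) \<Rightarrow> 'e set \<Rightarrow> bool" where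
  "abs_convex v smul A \<longleftrightarrow>
     0 \<in> A \<and> (\<forall>x\<in>A. \<forall>y\<in>A. x + y \<in> A) \<and> (\<forall>c x. v c \<le> 1 \<longrightarrow> x \<in> A \<longrightarrow> smul c x \<in> A)"

definition nconvex ::
  "('k::field \<Rightarrow> real) \<Rightarrow> ('k \<Rightarrow> 'e::ab_group_add \<Rightarrow> 'e) \<Rightarrow> 'e set \<Rightarrow> bool" where
  "nconvex v smul C \<longleftrightarrow> (\<exists>x B. abs_convex v smul B \<and> C = (\<lambda>b. x + b) ` B)"

text \<open>A (proper) filter on A is represented by an Isabelle filter F with A in F, F non-bottom.\<close>
definition convex_filter_on ::
  "('k::field \<Rightarrow> real) \<Rightarrow> ('k \<Rightarrow> 'e::ab_group_add \<Rightarrow> 'e) \<Rightarrow> 'e set \<Rightarrow> 'e filter \<Rightarrow> bool" where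
  "convex_filter_on v smul A F \<longleftrightarrow>
     F \<noteq> bot \<and> eventually (\<lambda>x. x \<in> A) F \<and>
     (\<forall>X. eventually (\<lambda>x. x \<in> X) F \<longrightarrow>
        (\<exists>C. nconvex v smul C \<and> C \<subseteq> A \<and> eventually (\<lambda>x. x \<in> C) F \<and> C \<subseteq> X))"

text \<open>Maximal: not properly contained in another convex filter (G finer than F means G \<le> F).\<close>
definition max_convex_filter_on ::
  "('k::field \<Rightarrow> real) \<Rightarrow> ('k \<Rightarrow> 'e::ab_group_add \<Rightarrow> 'e) \<Rightarrow> 'e set \<Rightarrow> 'e filter \<Rightarrow> bool" where
  "max_convex_filter_on v smul A F \<longleftrightarrow>
     convex_filter_on v smul A F \<and>
     (\<forall>G. convex_filter_on v smul A G \<and> G \<le> F \<longrightarrow> G = F)"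

definition cauchy_filter_sn :: "('e::ab_group_add \<Rightarrow> real) set \<Rightarrow> 'e filter \<Rightarrow> bool" where
  "cauchy_filter_sn P F \<longleftrightarrow>
     (\<forall>U. zero_nbhd P U \<longrightarrow>
        (\<exists>X. eventually (\<lambda>x. x \<in> X) F \<and> {x - y | x y. x \<in> X \<and> y \<in> X} \<subseteq> U))"

definition c_precompact ::
  "('k::field \<Rightarrow> real) \<Rightarrow> ('k \<Rightarrow> 'e::ab_group_add \<Rightarrow> 'e) \<Rightarrow> ('e \<Rightarrow> real) set \<Rightarrow> 'e set \<Rightarrow> bool" where
  "c_precompact v smul P A \<longleftrightarrow>
     abs_convex v smul A \<and>
     (\<forall>F. max_convex_filter_on v smul A F \<longrightarrow> cauchy_filter_sn P F)"

end

theory Submission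
  imports Defs
begin

text \<open>
  Everything rests on one property of a maximal convex filter \<open>F\<close>: a convex set meeting every
  member of \<open>F\<close> already belongs to \<open>F\<close>, since otherwise the traces on it of the members of
  \<open>F\<close> would generate a strictly finer convex filter.

  For the image \<open>f(A)\<close>, pull a maximal convex filter \<open>G\<close> on \<open>f(A)\<close> back to \<open>A\<close> and refine
  it to a maximal convex filter \<open>H\<close>, which is Cauchy. A small convex member \<open>D\<close> of \<open>H\<close> maps
  to a small convex set \<open>f(D)\<close> meeting every member of \<open>G\<close>, so \<open>f(D) \<in> G\<close>.

  For the closure, let \<open>F\<close> be maximal convex on \<open>closure A\<close> and \<open>B\<close> a basic zero neighbourhood.
  The traces on \<open>A\<close> of the thickenings \<open>X + B\<close>, \<open>X \<in> F\<close>, generate a convex filter on \<open>A\<close>;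
  a small convex member \<open>D\<close> of a maximal refinement yields the convex set \<open>D + B\<close>, which meets
  every member of \<open>F\<close> and hence lies in \<open>F\<close>. As the seminorms are non-archimedean, \<open>B\<close> is
  absolutely convex and \<open>D + B\<close> is as small as \<open>D\<close>.
\<close>

section \<open>Absolutely convex sets\<close>

lemma nonarch_abs_minus_one:
  assumes "nonarch_abs v"
  shows "v (-1) = 1"
proof -
  have mult: "v (x * y) = v x * v y" and nonneg: "v x \<ge> 0" and "v 1 \<noteq> 0" for x y
    using assms unfolding nonarch_abs_def by auto
  then have "v 1 = 1"
    using mult[of 1 1] by simp
  then have "(v (-1) - 1) * (v (-1) + 1) = 0"
    using mult[of "-1" "-1"] by (simp add: algebra_simps)
  then show ?thesis
    using nonneg[of "-1"] by auto
qed

lemma mem_plus_image_iff: "y \<in> (+) a ` B \<longleftrightarrow> y - a \<in> B"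
  for a :: "'a::ab_group_add"
  by (force simp: algebra_simps)

lemma abs_convex_imp_nconvex: "abs_convex v smul B \<Longrightarrow> nconvex v smul B"
  unfolding nconvex_def by (rule exI[of _ 0]) auto

locale nonarch_module = module smul
  for smul :: "'k::field \<Rightarrow> 'e::ab_group_add \<Rightarrow> 'e" +
  fixes v :: "'k \<Rightarrow> real"
  assumes nonarch_abs: "nonarch_abs v"
begin

lemma abs_convex_zero: "abs_convex v smul B \<Longrightarrow> 0 \<in> B"
  and abs_convex_add: "abs_convex v smul B \<Longrightarrow> x \<in> B \<Longrightarrow> y \<in> B \<Longrightarrow> x + y \<in> B"
  and abs_convex_scale: "abs_convex v smul B \<Longrightarrow> v c \<le> 1 \<Longrightarrow> x \<in> B \<Longrightarrow> smul c x \<in> B"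
  unfolding abs_convex_def by blast+

lemma abs_convex_uminus: "abs_convex v smul B \<Longrightarrow> x \<in> B \<Longrightarrow> - x \<in> B"
  using abs_convex_scale[of B "-1" x] nonarch_abs_minus_one[OF nonarch_abs] by simp

lemma abs_convex_diff: "abs_convex v smul B \<Longrightarrow> x \<in> B \<Longrightarrow> y \<in> B \<Longrightarrow> x - y \<in> B"
  using abs_convex_add[of B x "- y"] abs_convex_uminus[of B y] by simp

lemma abs_convex_Int: "abs_convex v smul B1 \<Longrightarrow> abs_convex v smul B2 \<Longrightarrow> abs_convex v smul (B1 \<inter> B2)"
  unfolding abs_convex_def by blast

lemma abs_convex_set_plus:
  assumes "abs_convex v smul B1" "abs_convex v smul B2"
  shows "abs_convex v smul (B1 + B2)"
  unfolding abs_convex_def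
proof (intro conjI ballI allI impI)
  show "0 \<in> B1 + B2"
    using set_plus_intro[OF abs_convex_zero abs_convex_zero, OF assms] by simp
next
  fix x y assume "x \<in> B1 + B2" "y \<in> B1 + B2"
  then obtain x1 x2 y1 y2 where "x1 \<in> B1" "x2 \<in> B2" "y1 \<in> B1" "y2 \<in> B2"
    and "x + y = (x1 + y1) + (x2 + y2)"
    by (auto elim!: set_plus_elim simp: algebra_simps)
  then show "x + y \<in> B1 + B2"
    using assms by (simp add: abs_convex_add set_plus_intro)
next
  fix c x assume "v c \<le> 1" "x \<in> B1 + B2"
  then show "smul c x \<in> B1 + B2"
    using assms by (auto elim!: set_plus_elim simp: abs_convex_scale set_plus_intro scale_right_distrib)
qed

lemma abs_convex_set_plus_diff:
  assumes "abs_convex v smul B" "\<forall>x\<in>D. \<forall>y\<in>D. x - y \<in> B" "x \<in> D + B" "y \<in> D + B"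
  shows "x - y \<in> B"
proof -
  obtain dx bx dy "by" where "dx \<in> D" "bx \<in> B" "dy \<in> D" "by \<in> B" "x - y = (dx - dy) + (bx - by)"
    using assms(3,4) by (auto elim!: set_plus_elim)
  then show ?thesis
    using assms(1,2) by (simp add: abs_convex_add abs_convex_diff)
qed

lemma nconvex_recenter:
  assumes "abs_convex v smul B" "w \<in> (+) x ` B"
  shows "(+) x ` B = (+) w ` B"
proof -
  have "w - x \<in> B"
    using assms(2) by (simp add: mem_plus_image_iff)
  then have "z - x \<in> B \<longleftrightarrow> z - w \<in> B" for z
    using abs_convex_diff[OF assms(1), of "z - x" "w - x"] abs_convex_add[OF assms(1), of "z - w" "w - x"]
    by auto
  then show ?thesis
    by (simp add: set_eq_iff mem_plus_image_iff)
qed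

lemma nconvex_Int:
  assumes "nconvex v smul C1" "nconvex v smul C2" "w \<in> C1" "w \<in> C2"
  shows "nconvex v smul (C1 \<inter> C2)"
proof -
  obtain x1 B1 x2 B2 where B: "abs_convex v smul B1" "C1 = (+) x1 ` B1"
      "abs_convex v smul B2" "C2 = (+) x2 ` B2"
    using assms(1,2) unfolding nconvex_def by blast
  then have "C1 \<inter> C2 = (+) w ` B1 \<inter> (+) w ` B2"
    using nconvex_recenter[of B1 w x1] nconvex_recenter[of B2 w x2] assms(3,4) by simp
  also have "\<dots> = (+) w ` (B1 \<inter> B2)"
    by (simp add: image_Int)
  finally show ?thesis
    unfolding nconvex_def using abs_convex_Int[OF B(1,3)] by blast
qed

lemma nconvex_set_plus:
  assumes "nconvex v smul C" "abs_convex v smul B"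
  shows "nconvex v smul (C + B)"
proof -
  obtain x B0 where B0: "abs_convex v smul B0" "C = (+) x ` B0"
    using assms(1) unfolding nconvex_def by blast
  then have "C + B = (+) x ` (B0 + B)"
    unfolding B0(2) set_plus_def by (auto simp: add.assoc image_iff)
  then show ?thesis
    unfolding nconvex_def using abs_convex_set_plus[OF B0(1) assms(2)] by blast
qed

end

section \<open>Maximal convex filters\<close>

lemma convex_filter_on_ne_bot: "convex_filter_on v smul A F \<Longrightarrow> F \<noteq> bot"
  and convex_filter_on_eventually_mem: "convex_filter_on v smul A F \<Longrightarrow> eventually (\<lambda>x. x \<in> A) F"
  and max_convex_filter_on_imp_convex: "max_convex_filter_on v smul A F \<Longrightarrow> convex_filter_on v smul A F"
  unfolding max_convex_filter_on_def convex_filter_on_def by blast+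

lemma convex_filter_on_Inf_chain:
  assumes "C \<noteq> {}" and conv: "\<And>F. F \<in> C \<Longrightarrow> convex_filter_on v smul A F"
    and chain: "\<And>F G. F \<in> C \<Longrightarrow> G \<in> C \<Longrightarrow> F \<le> G \<or> G \<le> F"
  shows "convex_filter_on v smul A (Inf C)"
proof -
  have ev: "eventually P (Inf C) \<longleftrightarrow> (\<exists>F\<in>C. eventually P F)" for P
  proof (rule eventually_Inf_base[OF assms(1)])
    fix F G assume "F \<in> C" "G \<in> C"
    then show "\<exists>H\<in>C. H \<le> inf F G"
      using chain[of F G] by (auto simp: inf_absorb1 inf_absorb2)
  qed
  show ?thesis
    unfolding convex_filter_on_def
  proof (intro conjI allI impI)
    show "Inf C \<noteq> bot"
      using ev[of "\<lambda>_. False"] conv unfolding convex_filter_on_def by (auto simp: eventually_False)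
    show "eventually (\<lambda>x. x \<in> A) (Inf C)"
      using ev assms(1) conv unfolding convex_filter_on_def by blast
    fix X assume "eventually (\<lambda>x. x \<in> X) (Inf C)"
    then obtain F where "F \<in> C" "eventually (\<lambda>x. x \<in> X) F"
      using ev by blast
    then show "\<exists>D. nconvex v smul D \<and> D \<subseteq> A \<and> eventually (\<lambda>x. x \<in> D) (Inf C) \<and> D \<subseteq> X"
      using conv ev unfolding convex_filter_on_def by blast
  qed
qed

lemma max_convex_filter_on_exists:
  assumes "convex_filter_on v smul A F"
  obtains G where "max_convex_filter_on v smul A G" "G \<le> F"
proof -
  define Z where "Z = {G. convex_filter_on v smul A G \<and> G \<le> F}"
  define finer where "finer = (\<lambda>G H :: 'b filter. H \<le> G)"
  have "\<exists>M\<in>Z. \<forall>G\<in>Z. finer M G \<longrightarrow> G = M"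
  proof (rule predicate_Zorn)
    show "partial_order_on Z (relation_of finer Z)"
      unfolding partial_order_on_def preorder_on_def refl_on_def trans_def antisym_on_def
        relation_of_def finer_def
      by auto
  next
    fix C assume C: "C \<in> Chains (relation_of finer Z)"
    then have CZ: "C \<subseteq> Z" and chain: "\<And>G H. G \<in> C \<Longrightarrow> H \<in> C \<Longrightarrow> G \<le> H \<or> H \<le> G"
      unfolding Chains_def relation_of_def finer_def by auto
    show "\<exists>M\<in>Z. \<forall>G\<in>C. finer G M"
    proof (cases "C = {}")
      case True
      then show ?thesis
        using assms unfolding Z_def by auto
    next
      case False
      then obtain G where "G \<in> C"
        by blast
      then have "Inf C \<le> F"
        using CZ Inf_lower[of G C] unfolding Z_def by auto
      moreover have "convex_filter_on v smul A (Inf C)"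
        using convex_filter_on_Inf_chain[OF False _ chain] CZ unfolding Z_def by blast
      ultimately show ?thesis
        unfolding Z_def finer_def by (blast intro: Inf_lower)
    qed
  qed
  then obtain M where M: "M \<in> Z" "\<And>G. G \<in> Z \<Longrightarrow> G \<le> M \<Longrightarrow> G = M"
    unfolding finer_def by blast
  have "max_convex_filter_on v smul A M"
    unfolding max_convex_filter_on_def
    using M unfolding Z_def by (auto intro: order_trans)
  then show thesis
    using that M(1) unfolding Z_def by blast
qed

lemma cauchy_convex_filter_small_nconvex:
  assumes "convex_filter_on v smul A F" "cauchy_filter_sn P F" "zero_nbhd P U"
  obtains D where "nconvex v smul D" "D \<subseteq> A" "eventually (\<lambda>x. x \<in> D) F"
    "\<forall>x\<in>D. \<forall>y\<in>D. x - y \<in> U"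
proof -
  obtain X where X: "eventually (\<lambda>x. x \<in> X) F" and small: "{x - y |x y. x \<in> X \<and> y \<in> X} \<subseteq> U"
    using assms(2,3) unfolding cauchy_filter_sn_def by blast
  obtain D where D: "nconvex v smul D" "D \<subseteq> A" "eventually (\<lambda>x. x \<in> D) F" "D \<subseteq> X"
    using assms(1) X unfolding convex_filter_on_def by blast
  have "x - y \<in> U" if "x \<in> D" "y \<in> D" for x y
    using that D(4) small by blast
  with D(1-3) show thesis
    using that by blast
qed

context nonarch_module
begin

lemma max_convex_filter_on_frequently_imp_eventually:
  assumes F: "max_convex_filter_on v smul A F" and W: "nconvex v smul W"
    and freq: "\<exists>\<^sub>F x in F. x \<in> W"
  shows "eventually (\<lambda>x. x \<in> W) F"
proof -
  have conv: "convex_filter_on v smul A F"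
    by (rule max_convex_filter_on_imp_convex[OF F])
  let ?G = "inf F (principal W)"
  have "convex_filter_on v smul A ?G"
    unfolding convex_filter_on_def
  proof (intro conjI allI impI)
    show "?G \<noteq> bot"
      using freq by (simp add: frequently_def eventually_inf_principal flip: eventually_False)
    show "eventually (\<lambda>x. x \<in> A) ?G"
      using conv by (auto simp: convex_filter_on_def eventually_inf_principal elim: eventually_mono)
    fix Y assume "eventually (\<lambda>x. x \<in> Y) ?G"
    then have "eventually (\<lambda>x. x \<in> {x. x \<in> W \<longrightarrow> x \<in> Y}) F"
      by (simp add: eventually_inf_principal)
    then obtain C where C: "nconvex v smul C" "C \<subseteq> A" "eventually (\<lambda>x. x \<in> C) F"
        "C \<subseteq> {x. x \<in> W \<longrightarrow> x \<in> Y}"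
      using conv unfolding convex_filter_on_def by blast
    obtain w where "w \<in> C" "w \<in> W"
      using frequently_ex[OF frequently_eventually_conj[OF freq C(3)]] by blast
    then have "nconvex v smul (C \<inter> W)"
      by (rule nconvex_Int[OF C(1) W])
    moreover have "eventually (\<lambda>x. x \<in> C \<inter> W) ?G"
      using C(3) by (auto simp: eventually_inf_principal elim: eventually_mono)
    ultimately show "\<exists>D. nconvex v smul D \<and> D \<subseteq> A \<and> eventually (\<lambda>x. x \<in> D) ?G \<and> D \<subseteq> Y"
      using C(2,4) by blast
  qed
  then have "?G = F"
    using F unfolding max_convex_filter_on_def by (simp add: inf.cobounded1)
  moreover have "eventually (\<lambda>x. x \<in> W) ?G"
    by (simp add: eventually_inf_principal)
  ultimately show ?thesis
    by simp
qed

end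

section \<open>The seminorm topology\<close>

definition seminorm_ball :: "('e \<Rightarrow> real) set \<Rightarrow> real \<Rightarrow> 'e set" where
  "seminorm_ball S e = {x. \<forall>p\<in>S. p x < e}"

lemma openin_seminorm_topology: "openin (seminorm_topology P) = seminorm_open P"
  unfolding seminorm_topology_def by (rule topology_inverse'[OF istopology_seminorm_open])

lemma topspace_seminorm_topology: "topspace (seminorm_topology P) = UNIV"
proof -
  have "seminorm_open P UNIV"
    unfolding seminorm_open_def by (intro ballI exI[of _ "{}"] exI[of _ 1]) auto
  then have "openin (seminorm_topology P) UNIV"
    by (simp add: openin_seminorm_topology)
  then show ?thesis
    using openin_subset by blast
qed

lemma zero_nbhd_vimage:
  assumes "continuous_map (seminorm_topology P1) (seminorm_topology P2) f" "f 0 = 0"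
    and "zero_nbhd P2 U"
  shows "zero_nbhd P1 (f -` U)"
proof -
  obtain W where W: "openin (seminorm_topology P2) W" "0 \<in> W" "W \<subseteq> U"
    using assms(3) unfolding zero_nbhd_def by blast
  have "openin (seminorm_topology P1) (f -` W)"
    using openin_continuous_map_preimage[OF assms(1) W(1)]
    by (simp add: topspace_seminorm_topology vimage_def)
  then show ?thesis
    unfolding zero_nbhd_def using W(2,3) assms(2) by blast
qed

locale nonarch_lcs = nonarch_module smul v
  for smul :: "'k::field \<Rightarrow> 'e::ab_group_add \<Rightarrow> 'e" and v +
  fixes P :: "('e \<Rightarrow> real) set"
  assumes nonarch_seminorm: "p \<in> P \<Longrightarrow> nonarch_seminorm v smul p"
begin

lemma abs_convex_seminorm_ball:
  assumes "S \<subseteq> P" "e > 0"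
  shows "abs_convex v smul (seminorm_ball S e)"
proof -
  have p: "p x \<ge> 0" "p (smul c x) = v c * p x" "p (x + y) \<le> max (p x) (p y)" if "p \<in> S" for p x y c
    using nonarch_seminorm that assms(1) unfolding nonarch_seminorm_def by blast+
  have "v 0 = 0"
    using nonarch_abs unfolding nonarch_abs_def by simp
  then have "p 0 < e" if "p \<in> S" for p
    using p(2)[OF that, of 0 0] assms(2) by simp
  then have "0 \<in> seminorm_ball S e"
    unfolding seminorm_ball_def by blast
  moreover have "x + y \<in> seminorm_ball S e" if "x \<in> seminorm_ball S e" "y \<in> seminorm_ball S e" for x y
    using that le_less_trans[OF p(3)] unfolding seminorm_ball_def by simp
  moreover have "smul c x \<in> seminorm_ball S e" if "v c \<le> 1" "x \<in> seminorm_ball S e" for c x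
  proof -
    have "p (smul c x) \<le> p x" if "p \<in> S" for p
      using mult_right_mono[OF \<open>v c \<le> 1\<close> p(1)[OF that]] p(2)[OF that] by simp
    then show ?thesis
      using \<open>x \<in> seminorm_ball S e\<close> unfolding seminorm_ball_def by (auto intro: le_less_trans)
  qed
  ultimately show ?thesis
    unfolding abs_convex_def by blast
qed

lemma seminorm_open_translated_ball:
  assumes "finite S" "S \<subseteq> P" "e > 0"
  shows "seminorm_open P {y. y - x \<in> seminorm_ball S e}"
  unfolding seminorm_open_def
proof (intro ballI exI conjI)
  fix z assume z: "z \<in> {y. y - x \<in> seminorm_ball S e}"
  show "{y. \<forall>p\<in>S. p (y - z) < e} \<subseteq> {y. y - x \<in> seminorm_ball S e}"
  proof
    fix y assume "y \<in> {y. \<forall>p\<in>S. p (y - z) < e}"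
    then have "y - z \<in> seminorm_ball S e" "z - x \<in> seminorm_ball S e"
      using z by (simp_all add: seminorm_ball_def)
    then have "(y - z) + (z - x) \<in> seminorm_ball S e"
      by (rule abs_convex_add[OF abs_convex_seminorm_ball[OF assms(2,3)]])
    then show "y \<in> {y. y - x \<in> seminorm_ball S e}"
      by simp
  qed
qed (use assms in auto)

lemma zero_nbhd_iff_seminorm_ball:
  "zero_nbhd P U \<longleftrightarrow> (\<exists>S e. finite S \<and> S \<subseteq> P \<and> e > 0 \<and> seminorm_ball S e \<subseteq> U)"
proof
  assume "zero_nbhd P U"
  then obtain W where "seminorm_open P W" "0 \<in> W" "W \<subseteq> U"
    unfolding zero_nbhd_def openin_seminorm_topology by blast
  then show "\<exists>S e. finite S \<and> S \<subseteq> P \<and> e > 0 \<and> seminorm_ball S e \<subseteq> U"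
    unfolding seminorm_open_def seminorm_ball_def by fastforce
next
  assume "\<exists>S e. finite S \<and> S \<subseteq> P \<and> e > 0 \<and> seminorm_ball S e \<subseteq> U"
  then obtain S e where Se: "finite S" "S \<subseteq> P" "e > 0" "seminorm_ball S e \<subseteq> U"
    by blast
  have "seminorm_open P (seminorm_ball S e)"
    using seminorm_open_translated_ball[OF Se(1-3), of 0] by simp
  moreover have "0 \<in> seminorm_ball S e"
    by (rule abs_convex_zero[OF abs_convex_seminorm_ball[OF Se(2,3)]])
  ultimately show "zero_nbhd P U"
    unfolding zero_nbhd_def openin_seminorm_topology using Se(4) by blast
qed

lemma in_closure_of_seminorm_topology:
  "x \<in> seminorm_topology P closure_of A \<longleftrightarrow>
    (\<forall>S e. finite S \<and> S \<subseteq> P \<and> e > 0 \<longrightarrow> (\<exists>a\<in>A. a - x \<in> seminorm_ball S e))"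
proof (intro iffI allI impI)
  fix S and e :: real
  assume x: "x \<in> seminorm_topology P closure_of A" and "finite S \<and> S \<subseteq> P \<and> e > 0"
  then have Se: "finite S" "S \<subseteq> P" "e > 0"
    by auto
  let ?T = "{y. y - x \<in> seminorm_ball S e}"
  have "openin (seminorm_topology P) ?T"
    unfolding openin_seminorm_topology by (rule seminorm_open_translated_ball[OF Se])
  moreover have "x \<in> ?T"
    using abs_convex_zero[OF abs_convex_seminorm_ball[OF Se(2,3)]] by simp
  ultimately obtain a where "a \<in> A" "a \<in> ?T"
    using x[unfolded in_closure_of, THEN conjunct2, rule_format, of ?T] by blast
  then show "\<exists>a\<in>A. a - x \<in> seminorm_ball S e"
    by blast
next
  assume near: "\<forall>S e. finite S \<and> S \<subseteq> P \<and> e > 0 \<longrightarrow> (\<exists>a\<in>A. a - x \<in> seminorm_ball S e)"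
  show "x \<in> seminorm_topology P closure_of A"
    unfolding in_closure_of topspace_seminorm_topology openin_seminorm_topology
  proof (intro conjI allI impI UNIV_I)
    fix T assume T: "x \<in> T \<and> seminorm_open P T"
    then obtain S e where Se: "finite S" "S \<subseteq> P" "e > 0" "{y. \<forall>p\<in>S. p (y - x) < e} \<subseteq> T"
      unfolding seminorm_open_def by (meson conjunct1 bspec)
    then obtain a where "a \<in> A" "a - x \<in> seminorm_ball S e"
      using near[rule_format, of S e] by blast
    then show "\<exists>y. y \<in> A \<and> y \<in> T"
      using Se(4) unfolding seminorm_ball_def by blast
  qed
qed

lemma abs_convex_closure_of:
  assumes A: "abs_convex v smul A"
  shows "abs_convex v smul (seminorm_topology P closure_of A)" (is "abs_convex v smul ?cl")
proof -
  have ball: "abs_convex v smul (seminorm_ball S e)" if "finite S \<and> S \<subseteq> P \<and> e > 0" for S e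
    using that abs_convex_seminorm_ball by blast
  have "0 \<in> ?cl"
    unfolding in_closure_of_seminorm_topology
    using abs_convex_zero[OF A] abs_convex_zero[OF ball] by fastforce
  moreover have "x + y \<in> ?cl" if x: "x \<in> ?cl" and y: "y \<in> ?cl" for x y
    unfolding in_closure_of_seminorm_topology
  proof (intro allI impI)
    fix S and e :: real assume Se: "finite S \<and> S \<subseteq> P \<and> e > 0"
    obtain a b where "a \<in> A" "a - x \<in> seminorm_ball S e" "b \<in> A" "b - y \<in> seminorm_ball S e"
      using x[unfolded in_closure_of_seminorm_topology, rule_format, OF Se]
        y[unfolded in_closure_of_seminorm_topology, rule_format, OF Se] by blast
    then have "a + b \<in> A" "(a - x) + (b - y) \<in> seminorm_ball S e"
      using abs_convex_add[OF A] abs_convex_add[OF ball[OF Se]] by auto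
    then show "\<exists>c\<in>A. c - (x + y) \<in> seminorm_ball S e"
      by (intro bexI[of _ "a + b"]) (simp_all add: add_diff_add)
  qed
  moreover have "smul c x \<in> ?cl" if c: "v c \<le> 1" and x: "x \<in> ?cl" for c x
    unfolding in_closure_of_seminorm_topology
  proof (intro allI impI)
    fix S and e :: real assume Se: "finite S \<and> S \<subseteq> P \<and> e > 0"
    obtain a where "a \<in> A" "a - x \<in> seminorm_ball S e"
      using x[unfolded in_closure_of_seminorm_topology, rule_format, OF Se] by blast
    then have "smul c a \<in> A" "smul c (a - x) \<in> seminorm_ball S e"
      using abs_convex_scale[OF A c] abs_convex_scale[OF ball[OF Se] c] by auto
    then show "\<exists>b\<in>A. b - smul c x \<in> seminorm_ball S e"
      by (intro bexI[of _ "smul c a"]) (simp_all add: scale_right_diff_distrib)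
  qed
  ultimately show ?thesis
    unfolding abs_convex_def by blast
qed

lemma closure_of_subset_set_plus_seminorm_ball:
  assumes "finite S" "S \<subseteq> P" "e > 0"
  shows "seminorm_topology P closure_of A \<subseteq> A + seminorm_ball S e"
proof
  fix x assume "x \<in> seminorm_topology P closure_of A"
  then obtain a where a: "a \<in> A" "a - x \<in> seminorm_ball S e"
    using assms unfolding in_closure_of_seminorm_topology by blast
  have "- (a - x) \<in> seminorm_ball S e"
    by (rule abs_convex_uminus[OF abs_convex_seminorm_ball[OF assms(2,3)] a(2)])
  then have "x - a \<in> seminorm_ball S e"
    by simp
  then have "a + (x - a) \<in> A + seminorm_ball S e"
    by (rule set_plus_intro[OF a(1)])
  then show "x \<in> A + seminorm_ball S e"
    by simp
qed

end

section \<open>Images under continuous linear maps\<close>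

lemma frequently_mono_filter: "F \<le> G \<Longrightarrow> frequently P F \<Longrightarrow> frequently P G"
  unfolding frequently_def using filter_leD by blast

lemma frequently_image_if_le_filtercomap:
  assumes "H \<le> filtercomap f G" "H \<noteq> bot" "eventually (\<lambda>x. x \<in> D) H"
  shows "\<exists>\<^sub>F y in G. y \<in> f ` D"
proof -
  have "\<exists>\<^sub>F x in H. f x \<in> f ` D"
    using eventually_frequently[OF assms(2,3)] by (auto elim: frequently_elim1)
  then have "\<exists>\<^sub>F y in filtermap f H. y \<in> f ` D"
    by (simp add: frequently_filtermap)
  moreover have "filtermap f H \<le> G"
    using assms(1) by (simp add: filtermap_le_iff_le_filtercomap)
  ultimately show ?thesis
    using frequently_mono_filter by blast
qed

locale nonarch_module_hom = module_hom s1 s2 f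
  for s1 :: "'k::field \<Rightarrow> 'e::ab_group_add \<Rightarrow> 'e"
    and s2 :: "'k \<Rightarrow> 'f::ab_group_add \<Rightarrow> 'f"
    and f :: "'e \<Rightarrow> 'f" +
  fixes v :: "'k \<Rightarrow> real"
  assumes nonarch_abs: "nonarch_abs v"
begin

sublocale dom: nonarch_module s1 v
  by unfold_locales (rule nonarch_abs)

sublocale cod: nonarch_module s2 v
  by unfold_locales (rule nonarch_abs)

lemma abs_convex_image:
  assumes B: "abs_convex v s1 B"
  shows "abs_convex v s2 (f ` B)"
  unfolding abs_convex_def
proof (intro conjI ballI allI impI)
  show "0 \<in> f ` B"
    using dom.abs_convex_zero[OF B] zero by (metis image_eqI)
  show "x + y \<in> f ` B" if "x \<in> f ` B" "y \<in> f ` B" for x y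
    using that dom.abs_convex_add[OF B] by (auto simp flip: add)
  show "s2 c x \<in> f ` B" if "v c \<le> 1" "x \<in> f ` B" for c x
    using that dom.abs_convex_scale[OF B] by (auto simp flip: scale)
qed

lemma abs_convex_vimage:
  assumes B: "abs_convex v s2 B"
  shows "abs_convex v s1 (f -` B)"
  unfolding abs_convex_def
  using cod.abs_convex_zero[OF B] cod.abs_convex_add[OF B] cod.abs_convex_scale[OF B]
  by (simp add: add scale)

lemma nconvex_image:
  assumes "nconvex v s1 C"
  shows "nconvex v s2 (f ` C)"
proof -
  obtain x B where B: "abs_convex v s1 B" "C = (+) x ` B"
    using assms unfolding nconvex_def by blast
  then have "f ` C = (+) (f x) ` (f ` B)"
    by (simp add: image_image add)
  then show ?thesis
    unfolding nconvex_def using abs_convex_image[OF B(1)] by blast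
qed

lemma nconvex_vimage:
  assumes C: "nconvex v s2 C" and w: "f w \<in> C"
  shows "nconvex v s1 (f -` C)"
proof -
  obtain x B where B: "abs_convex v s2 B" "C = (+) x ` B"
    using C unfolding nconvex_def by blast
  then have "C = (+) (f w) ` B"
    using cod.nconvex_recenter w by blast
  then have "f -` C = (+) w ` (f -` B)"
    by (simp add: set_eq_iff mem_plus_image_iff diff)
  then show ?thesis
    unfolding nconvex_def using abs_convex_vimage[OF B(1)] by blast
qed

lemma convex_filter_on_filtercomap:
  assumes G: "convex_filter_on v s2 (f ` A) G" and A: "abs_convex v s1 A"
  shows "convex_filter_on v s1 A (inf (filtercomap f G) (principal A))"
    (is "convex_filter_on v s1 A ?H")
  unfolding convex_filter_on_def
proof (intro conjI allI impI)
  have G_ne: "G \<noteq> bot" and G_A: "eventually (\<lambda>y. y \<in> f ` A) G"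
    using G unfolding convex_filter_on_def by auto
  show "?H \<noteq> bot"
  proof
    assume "?H = bot"
    then have "eventually (\<lambda>x. x \<in> A \<longrightarrow> False) (filtercomap f G)"
      using eventually_inf_principal[of "\<lambda>_. False" "filtercomap f G" A] by simp
    then obtain Q where Q: "eventually Q G" "\<forall>x. Q (f x) \<longrightarrow> x \<in> A \<longrightarrow> False"
      unfolding eventually_filtercomap by blast
    obtain y where "Q y" "y \<in> f ` A"
      using eventually_happens'[OF G_ne eventually_conj[OF Q(1) G_A]] by blast
    then show False
      using Q(2) by blast
  qed
  show "eventually (\<lambda>x. x \<in> A) ?H"
    by (simp add: eventually_inf_principal)
  fix Y assume "eventually (\<lambda>x. x \<in> Y) ?H"
  then have "eventually (\<lambda>x. x \<in> A \<longrightarrow> x \<in> Y) (filtercomap f G)"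
    unfolding eventually_inf_principal .
  then obtain Q where Q: "eventually Q G" "\<forall>x. Q (f x) \<longrightarrow> x \<in> A \<longrightarrow> x \<in> Y"
    unfolding eventually_filtercomap by blast
  have "eventually (\<lambda>y. y \<in> Collect Q) G"
    using Q(1) by simp
  then obtain C where C: "nconvex v s2 C" "C \<subseteq> f ` A" "eventually (\<lambda>y. y \<in> C) G" "C \<subseteq> Collect Q"
    using G unfolding convex_filter_on_def by blast
  obtain w where w: "w \<in> A" "f w \<in> C"
    using eventually_happens'[OF G_ne C(3)] C(2) by blast
  have "nconvex v s1 (f -` C \<inter> A)"
    using dom.nconvex_Int[OF nconvex_vimage[OF C(1) w(2)] abs_convex_imp_nconvex[OF A]] w by blast
  moreover have "eventually (\<lambda>x. x \<in> f -` C \<inter> A) ?H"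
    unfolding eventually_inf_principal
    using eventually_filtercomapI[OF C(3), of f] by (rule eventually_mono) simp
  moreover have "f -` C \<inter> A \<subseteq> Y"
    using C(4) Q(2) by blast
  ultimately show "\<exists>D. nconvex v s1 D \<and> D \<subseteq> A \<and> eventually (\<lambda>x. x \<in> D) ?H \<and> D \<subseteq> Y"
    by blast
qed

end

theorem (in nonarch_module_hom) c_precompact_image:
  assumes cont: "continuous_map (seminorm_topology P1) (seminorm_topology P2) f"
    and A: "c_precompact v s1 P1 A"
  shows "c_precompact v s2 P2 (f ` A)"
  unfolding c_precompact_def
proof (intro conjI allI impI)
  have A_conv: "abs_convex v s1 A"
    and A_max: "\<And>H. max_convex_filter_on v s1 A H \<Longrightarrow> cauchy_filter_sn P1 H"
    using A unfolding c_precompact_def by blast+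
  show "abs_convex v s2 (f ` A)"
    by (rule abs_convex_image[OF A_conv])
  fix G assume G: "max_convex_filter_on v s2 (f ` A) G"
  have "convex_filter_on v s1 A (inf (filtercomap f G) (principal A))"
    by (rule convex_filter_on_filtercomap[OF max_convex_filter_on_imp_convex[OF G] A_conv])
  then obtain H where H: "max_convex_filter_on v s1 A H" "H \<le> inf (filtercomap f G) (principal A)"
    by (rule max_convex_filter_on_exists)
  have H_conv: "convex_filter_on v s1 A H"
    by (rule max_convex_filter_on_imp_convex[OF H(1)])
  have H_le: "H \<le> filtercomap f G"
    by (rule order_trans[OF H(2) inf.cobounded1])
  show "cauchy_filter_sn P2 G"
    unfolding cauchy_filter_sn_def
  proof (intro allI impI)
    fix U assume "zero_nbhd P2 U"
    then have "zero_nbhd P1 (f -` U)"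
      by (rule zero_nbhd_vimage[OF cont zero])
    then obtain D where D: "nconvex v s1 D" "eventually (\<lambda>x. x \<in> D) H"
        "\<forall>x\<in>D. \<forall>y\<in>D. x - y \<in> f -` U"
      by (rule cauchy_convex_filter_small_nconvex[OF H_conv A_max[OF H(1)]])
    have "\<exists>\<^sub>F y in G. y \<in> f ` D"
      by (rule frequently_image_if_le_filtercomap[OF H_le convex_filter_on_ne_bot[OF H_conv] D(2)])
    then have "eventually (\<lambda>y. y \<in> f ` D) G"
      by (rule cod.max_convex_filter_on_frequently_imp_eventually[OF G nconvex_image[OF D(1)]])
    moreover have "{x - y |x y. x \<in> f ` D \<and> y \<in> f ` D} \<subseteq> U"
    proof safe
      fix x y assume "x \<in> D" "y \<in> D"
      then show "f x - f y \<in> U"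
        using D(3) by (simp flip: diff)
    qed
    ultimately show "\<exists>X. eventually (\<lambda>x. x \<in> X) G \<and> {x - y |x y. x \<in> X \<and> y \<in> X} \<subseteq> U"
      by (intro exI[of _ "f ` D"] conjI)
  qed
qed

section \<open>Closures\<close>

definition thickened_filter :: "'e::ab_group_add set \<Rightarrow> 'e set \<Rightarrow> 'e filter \<Rightarrow> 'e filter" where
  "thickened_filter A B F = inf (filtermap (\<lambda>(x, b). x + b) (F \<times>\<^sub>F principal B)) (principal A)"

lemma eventually_thickened_filter:
  "eventually Q (thickened_filter A B F) \<longleftrightarrow>
    (\<exists>X. eventually (\<lambda>x. x \<in> X) F \<and> (\<forall>z\<in>(X + B) \<inter> A. Q z))"
  (is "?lhs \<longleftrightarrow> ?rhs")
proof
  assume ?lhs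
  then obtain Pf Pg where "eventually Pf F" "\<forall>b\<in>B. Pg b"
      "\<forall>x b. Pf x \<longrightarrow> Pg b \<longrightarrow> x + b \<in> A \<longrightarrow> Q (x + b)"
    unfolding thickened_filter_def eventually_inf_principal eventually_filtermap
      eventually_prod_filter eventually_principal by auto
  then show ?rhs
    by (intro exI[of _ "Collect Pf"]) (auto elim!: set_plus_elim)
next
  assume ?rhs
  then obtain X where "eventually (\<lambda>x. x \<in> X) F" "\<forall>z\<in>(X + B) \<inter> A. Q z"
    by blast
  then show ?lhs
    unfolding thickened_filter_def eventually_inf_principal eventually_filtermap
      eventually_prod_filter eventually_principal
    by (intro exI[of _ "\<lambda>x. x \<in> X"] exI[of _ "\<lambda>b. b \<in> B"]) auto
qed

context nonarch_module
begin

lemma convex_filter_on_thickened_filter: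
  assumes F: "convex_filter_on v smul A' F" and near: "eventually (\<lambda>x. x \<in> A + B) F"
    and A: "abs_convex v smul A" and B: "abs_convex v smul B"
  shows "convex_filter_on v smul A (thickened_filter A B F)"
proof -
  have meets: "(X + B) \<inter> A \<noteq> {}" if X: "eventually (\<lambda>x. x \<in> X) F" for X
  proof -
    obtain x where "x \<in> X" "x \<in> A + B"
      using eventually_happens'[OF convex_filter_on_ne_bot[OF F] eventually_conj[OF X near]] by blast
    then obtain a b where "a \<in> A" "b \<in> B" "x = a + b"
      by (auto elim: set_plus_elim)
    then have "a \<in> (X + B) \<inter> A"
      using \<open>x \<in> X\<close> set_plus_intro[OF _ abs_convex_uminus[OF B], of x X b] by auto
    then show ?thesis
      by blast
  qed
  show ?thesis
    unfolding convex_filter_on_def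
  proof (intro conjI allI impI)
    show "thickened_filter A B F \<noteq> bot"
      using meets by (auto simp: eventually_thickened_filter simp flip: eventually_False)
    show "eventually (\<lambda>x. x \<in> A) (thickened_filter A B F)"
      unfolding eventually_thickened_filter by (intro exI[of _ UNIV]) auto
    fix Y assume "eventually (\<lambda>x. x \<in> Y) (thickened_filter A B F)"
    then obtain X where X: "eventually (\<lambda>x. x \<in> X) F" "(X + B) \<inter> A \<subseteq> Y"
      unfolding eventually_thickened_filter by blast
    then obtain C where C: "nconvex v smul C" "eventually (\<lambda>x. x \<in> C) F" "C \<subseteq> X"
      using F unfolding convex_filter_on_def by blast
    obtain w where "w \<in> (C + B) \<inter> A"
      using meets[OF C(2)] by blast
    then have "nconvex v smul ((C + B) \<inter> A)"
      using nconvex_Int[OF nconvex_set_plus[OF C(1) B] abs_convex_imp_nconvex[OF A]] by blast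
    moreover have "eventually (\<lambda>x. x \<in> (C + B) \<inter> A) (thickened_filter A B F)"
      unfolding eventually_thickened_filter using C(2) by blast
    moreover have "(C + B) \<inter> A \<subseteq> Y"
      using X(2) set_plus_mono2[OF C(3) order_refl, of B] by blast
    ultimately show "\<exists>D. nconvex v smul D \<and> D \<subseteq> A \<and> eventually (\<lambda>x. x \<in> D) (thickened_filter A B F) \<and> D \<subseteq> Y"
      by blast
  qed
qed

lemma frequently_set_plus_if_le_thickened_filter:
  assumes "H \<le> thickened_filter A B F" "H \<noteq> bot" "eventually (\<lambda>x. x \<in> D) H"
    and B: "abs_convex v smul B"
  shows "\<exists>\<^sub>F x in F. x \<in> D + B"
proof (rule ccontr)
  assume "\<not> ?thesis"
  then have "eventually (\<lambda>x. x \<notin> D + B) F"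
    by (simp add: not_frequently)
  moreover have "z \<notin> D" if z: "z \<in> (- (D + B) + B) \<inter> A" for z
  proof
    assume "z \<in> D"
    obtain x b where "z = x + b" "x \<notin> D + B" "b \<in> B"
      using z by (auto elim!: set_plus_elim)
    moreover have "z + - b \<in> D + B"
      using \<open>z \<in> D\<close> abs_convex_uminus[OF B \<open>b \<in> B\<close>] by blast
    ultimately show False
      by simp
  qed
  ultimately have "eventually (\<lambda>z. z \<notin> D) (thickened_filter A B F)"
    unfolding eventually_thickened_filter by (intro exI[of _ "- (D + B)"]) auto
  then have "eventually (\<lambda>z. z \<notin> D) H"
    by (rule filter_leD[OF assms(1)])
  with assms(3) have "eventually (\<lambda>z. False) H"
    by (auto elim: eventually_elim2)
  with assms(2) show False
    by (simp add: eventually_False)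
qed

end

context nonarch_lcs
begin

theorem c_precompact_closure_of:
  assumes A: "c_precompact v smul P A"
  shows "c_precompact v smul P (seminorm_topology P closure_of A)"
  unfolding c_precompact_def
proof (intro conjI allI impI)
  let ?cl = "seminorm_topology P closure_of A"
  have A_conv: "abs_convex v smul A"
    and A_max: "\<And>H. max_convex_filter_on v smul A H \<Longrightarrow> cauchy_filter_sn P H"
    using A unfolding c_precompact_def by blast+
  show "abs_convex v smul ?cl"
    by (rule abs_convex_closure_of[OF A_conv])
  fix F assume F: "max_convex_filter_on v smul ?cl F"
  then have F_conv: "convex_filter_on v smul ?cl F"
    by (rule max_convex_filter_on_imp_convex)
  show "cauchy_filter_sn P F"
    unfolding cauchy_filter_sn_def
  proof (intro allI impI)
    fix U assume "zero_nbhd P U"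
    then obtain S e where Se: "finite S" "S \<subseteq> P" "e > 0" and "seminorm_ball S e \<subseteq> U"
      unfolding zero_nbhd_iff_seminorm_ball by blast
    define B where "B = seminorm_ball S e"
    have "B \<subseteq> U"
      unfolding B_def by fact
    have B_conv: "abs_convex v smul B"
      unfolding B_def by (rule abs_convex_seminorm_ball[OF Se(2,3)])
    have B_nbhd: "zero_nbhd P B"
      unfolding B_def zero_nbhd_iff_seminorm_ball using Se by blast
    have "eventually (\<lambda>x. x \<in> A + B) F"
      using convex_filter_on_eventually_mem[OF F_conv]
      by (rule eventually_mono) (use closure_of_subset_set_plus_seminorm_ball[OF Se, of A] B_def in blast)
    then have "convex_filter_on v smul A (thickened_filter A B F)"
      by (rule convex_filter_on_thickened_filter[OF F_conv _ A_conv B_conv])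
    then obtain H where H: "max_convex_filter_on v smul A H" "H \<le> thickened_filter A B F"
      by (rule max_convex_filter_on_exists)
    have H_conv: "convex_filter_on v smul A H"
      by (rule max_convex_filter_on_imp_convex[OF H(1)])
    obtain D where D: "nconvex v smul D" "eventually (\<lambda>x. x \<in> D) H" "\<forall>x\<in>D. \<forall>y\<in>D. x - y \<in> B"
      by (rule cauchy_convex_filter_small_nconvex[OF H_conv A_max[OF H(1)] B_nbhd])
    have "\<exists>\<^sub>F x in F. x \<in> D + B"
      by (rule frequently_set_plus_if_le_thickened_filter[OF H(2) convex_filter_on_ne_bot[OF H_conv] D(2) B_conv])
    then have "eventually (\<lambda>x. x \<in> D + B) F"
      by (rule max_convex_filter_on_frequently_imp_eventually[OF F nconvex_set_plus[OF D(1) B_conv]])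
    moreover have "{x - y |x y. x \<in> D + B \<and> y \<in> D + B} \<subseteq> U"
      using abs_convex_set_plus_diff[OF B_conv D(3)] \<open>B \<subseteq> U\<close> by blast
    ultimately show "\<exists>X. eventually (\<lambda>x. x \<in> X) F \<and> {x - y |x y. x \<in> X \<and> y \<in> X} \<subseteq> U"
      by (intro exI[of _ "D + B"] conjI)
  qed
qed

end

lemma lcs_imp_nonarch_lcs: "nonarch_abs v \<Longrightarrow> lcs v smul P \<Longrightarrow> nonarch_lcs smul v P"
  unfolding lcs_def nonarch_lcs_def nonarch_lcs_axioms_def nonarch_module_def
    nonarch_module_axioms_def module_iff_vector_space
  by blast

theorem mainTheorem1:
  fixes v :: "'k::field \<Rightarrow> real"
    and smulE :: "'k \<Rightarrow> 'e::ab_group_add \<Rightarrow> 'e" and PE :: "('e \<Rightarrow> real) set"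
    and smulF :: "'k \<Rightarrow> 'f::ab_group_add \<Rightarrow> 'f" and PF :: "('f \<Rightarrow> real) set"
    and A :: "'e set"
  assumes "complete_nonarch_field v"
    and "lcs v smulE PE" and "lcs v smulF PF"
    and "c_precompact v smulE PE A"
  shows "(\<forall>f. Vector_Spaces.linear smulE smulF f \<and>
              continuous_map (seminorm_topology PE) (seminorm_topology PF) f \<longrightarrow>
              c_precompact v smulF PF (f ` A))
       \<and> c_precompact v smulE PE ((seminorm_topology PE) closure_of A)"
proof -
  have v: "nonarch_abs v"
    using assms(1) by (simp add: complete_nonarch_field_def)
  interpret E: nonarch_lcs smulE v PE
    using v assms(2) by (rule lcs_imp_nonarch_lcs)
  have "c_precompact v smulF PF (f ` A)"
    if "Vector_Spaces.linear smulE smulF f"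
      and "continuous_map (seminorm_topology PE) (seminorm_topology PF) f" for f
  proof -
    interpret nonarch_module_hom smulE smulF f v
      using that(1) v
      by (simp add: nonarch_module_hom_def nonarch_module_hom_axioms_def module_hom_iff_linear)
    show ?thesis
      by (rule c_precompact_image[OF that(2) assms(4)])
  qed
  then show ?thesis
    using E.c_precompact_closure_of[OF assms(4)] by blast
qed

end
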